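(* Let $w,v$ be two nodes in a syntactically homogeneous (division-free) algebraic circuit $F$ whose nodes carry syntactic-degree upper bounds $\deg'(\cdot)$, and suppose $\deg'(w)>\deg'(v)/2$. Then the polynomial $\partial_w f_v$ has degree at most $\deg'(v)-\deg'(w)$.
   Context: $F$ is a division-free algebraic circuit over $\mathbb Z$ produced by the homogenization construction in which integer leaves are treated like variables: each original node $u$ is duplicated into nodes $[u,i]$, integer and variable leaves $\ell$ give $[\ell,1]=\ell$ and $[\ell,i]=0$ for $i\ne1$, $[u,i]=[u_1,i]+[u_2,i]$ for $u=u_1+u_2$, $[u,i]=\sum_{j+l=i}[u_1,j]\times[u_2,l]$ for $u=u_1\times u_2$; the number $\deg'([u,i])=i$ is the syntactic-degree upper bound of that node (so every $+$ gate has both children with the same $\deg'$, every $\times$ gate has $\deg'$ equal to the sum of its children's, and the polynomial computed at each node has degree at most its $\deg'$). $F$ being syntactically homogeneous means $\deg'(v)=\deg'(v_1)=\deg'(v_2)$ for every $+$ gate $v=v_1+v_2$. For a node $v$, $F_v$ is the subcircuit rooted at $v$ and $f_v$ the polynomial it computes. The polynomial $\partial_wf_v$ is defined by: $0$ if $w$ is not in $F_v$; $1$ if $w=v$; otherwise $\partial_wf_{v_1}+\partial_wf_{v_2}$ if $v=v_1+v_2$; and $(\partial_wf_{v_1})\cdot f_{v_2}$ if $v=v_1\cdot v_2$ with $\deg'(v_1)\ge\deg'(v_2)$, or $v=v_2\cdot v_1$ with $\deg'(v_1)>\deg'(v_2)$. *)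

theory Defs
  imports "HOL-Library.Poly_Mapping"
begin

text \<open>Multivariate integer polynomials in variables indexed by nat:
  a monomial is a finitely supported exponent vector finitely supported nat-to-nat map,
  a polynomial is a finitely supported coefficient map on monomials.\<close>
type_synonym mpoly = "(nat \<Rightarrow>\<^sub>0 nat) \<Rightarrow>\<^sub>0 int"

definition mvar :: "nat \<Rightarrow> mpoly" where
  "mvar i = Poly_Mapping.single (Poly_Mapping.single i 1) 1"

text \<open>Total degree (the zero polynomial gets degree 0).\<close>
definition tdeg :: "mpoly \<Rightarrow> nat" where
  "tdeg p = Max (insert 0 ((\<lambda>m. sum (Poly_Mapping.lookup m) (Poly_Mapping.keys m)) ` Poly_Mapping.keys p))"

datatype gate = Var nat | Cst int | Add nat nat | Mul nat nat

text \<open>Well-formed circuit on nodes 0..N-1: children of a gate have smaller index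
  (so the circuit is a finite DAG).\<close>
definition wf_circuit :: "(nat \<Rightarrow> gate) \<Rightarrow> nat \<Rightarrow> bool" where
  "wf_circuit C N \<longleftrightarrow> (\<forall>u<N. \<forall>a b. (C u = Add a b \<or> C u = Mul a b) \<longrightarrow> a < u \<and> b < u)"

function evalc :: "(nat \<Rightarrow> gate) \<Rightarrow> nat \<Rightarrow> mpoly" where
  "evalc C u = (case C u of
      Var i \<Rightarrow> mvar i
    | Cst c \<Rightarrow> of_int c
    | Add a b \<Rightarrow> (if a < u \<and> b < u then evalc C a + evalc C b else 0)
    | Mul a b \<Rightarrow> (if a < u \<and> b < u then evalc C a * evalc C b else 0))"
  by pat_completeness auto
termination by (relation "measure (\<lambda>(C,u). u)") auto

definition child :: "(nat \<Rightarrow> gate) \<Rightarrow> nat \<Rightarrow> nat \<Rightarrow> bool" where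
  "child C a u \<longleftrightarrow> (\<exists>b. C u = Add a b \<or> C u = Add b a \<or> C u = Mul a b \<or> C u = Mul b a)"

definition in_sub :: "(nat \<Rightarrow> gate) \<Rightarrow> nat \<Rightarrow> nat \<Rightarrow> bool" where
  "in_sub C w v \<longleftrightarrow> (child C)\<^sup>*\<^sup>* w v"

text \<open>The polynomial \<partial>_w f_v, relative to the degree labelling D = deg'.\<close>
function pd :: "(nat \<Rightarrow> gate) \<Rightarrow> (nat \<Rightarrow> nat) \<Rightarrow> nat \<Rightarrow> nat \<Rightarrow> mpoly" where
  "pd C D w v = (if \<not> in_sub C w v then 0 else if w = v then 1 else
     (case C v of
        Add a b \<Rightarrow> (if a < v \<and> b < v then pd C D w a + pd C D w b else 0)
      | Mul a b \<Rightarrow> (if a < v \<and> b < v then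
                     (if D a \<ge> D b then pd C D w a * evalc C b
                      else pd C D w b * evalc C a)
                   else 0)
      | _ \<Rightarrow> 0))"
  by pat_completeness auto
termination by (relation "measure (\<lambda>(C,D,w,v). v)") auto

definition deg_labelling :: "(nat \<Rightarrow> gate) \<Rightarrow> nat \<Rightarrow> (nat \<Rightarrow> nat) \<Rightarrow> bool" where
  "deg_labelling C N D \<longleftrightarrow>
     (\<forall>u<N. \<forall>a b. C u = Mul a b \<longrightarrow> D u = D a + D b) \<and>
     (\<forall>u<N. tdeg (evalc C u) \<le> D u)"

definition synt_homogeneous :: "(nat \<Rightarrow> gate) \<Rightarrow> nat \<Rightarrow> (nat \<Rightarrow> nat) \<Rightarrow> bool" where
  "synt_homogeneous C N D \<longleftrightarrow> (\<forall>u<N. \<forall>a b. C u = Add a b \<longrightarrow> D a = D u \<and> D b = D u)"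

end

theory Submission
  imports Defs
begin

text \<open>At a \<open>+\<close> gate \<open>\<partial>\<^sub>wf\<^sub>v\<close> is the
  sum of the children's derivatives, all of which carry the same label \<open>deg'(v)\<close>. At a
  \<open>\<times>\<close> gate it is the derivative along one child \<open>v\<^sub>1\<close>, of degree at most
  \<open>deg'(v\<^sub>1) - deg'(w)\<close>, times the polynomial of the other child \<open>v\<^sub>2\<close>, of degree at
  most \<open>deg'(v\<^sub>2)\<close>; since \<open>deg'(v) = deg'(v\<^sub>1) + deg'(v\<^sub>2)\<close> the bound
  \<open>deg'(v) - deg'(w)\<close> propagates. The labels never decrease from a node of \<open>F\<^sub>v\<close> up
  to \<open>v\<close>, so the truncated subtraction is harmless.\<close>

definition monomial_degree :: "(nat \<Rightarrow>\<^sub>0 nat) \<Rightarrow> nat" where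
  "monomial_degree m = sum (Poly_Mapping.lookup m) (Poly_Mapping.keys m)"

lemma monomial_degree_add: "monomial_degree (m + n) = monomial_degree m + monomial_degree n"
  unfolding monomial_degree_def
  using setsum_keys_plus_distrib[where f = "\<lambda>_ x. x" and p = m and q = n] by simp

lemma tdeg_le_iff: "tdeg p \<le> k \<longleftrightarrow> (\<forall>m \<in> Poly_Mapping.keys p. monomial_degree m \<le> k)"
  unfolding tdeg_def monomial_degree_def by (simp add: finite_keys)

lemma tdeg_zero [simp]: "tdeg 0 = 0"
  unfolding tdeg_def by simp

lemma tdeg_one [simp]: "tdeg 1 = 0"
  unfolding tdeg_def by simp

lemma tdeg_add_le: "tdeg p \<le> k \<Longrightarrow> tdeg q \<le> k \<Longrightarrow> tdeg (p + q) \<le> k"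
  using keys_add[of p q] unfolding tdeg_le_iff by blast

lemma tdeg_mult_le: "tdeg p \<le> k \<Longrightarrow> tdeg q \<le> l \<Longrightarrow> tdeg (p * q) \<le> k + l"
  using keys_mult[of p q] unfolding tdeg_le_iff
  by (fastforce simp: monomial_degree_add intro: add_mono)

lemma tdeg_mult_le_diff:
  assumes "tdeg p \<le> k - j" and "tdeg q \<le> l" and "p \<noteq> 0 \<Longrightarrow> j \<le> k"
  shows "tdeg (p * q) \<le> k + l - j"
proof (cases "p = 0")
  case False
  then show ?thesis using tdeg_mult_le[OF assms(1,2)] assms(3) by simp
qed simp

lemma in_sub_refl: "in_sub C v v"
  unfolding in_sub_def by simp

lemma in_sub_child: "in_sub C w a \<Longrightarrow> child C a v \<Longrightarrow> in_sub C w v"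
  unfolding in_sub_def by (rule rtranclp.rtrancl_into_rtrancl)

lemma label_mono_in_sub:
  assumes "wf_circuit C N" "deg_labelling C N D" "synt_homogeneous C N D"
    and "in_sub C w v" and "v < N"
  shows "D w \<le> D v"
  using assms(4,5) unfolding in_sub_def
proof (induction rule: rtranclp_induct)
  case (step u v)
  then obtain b where gate: "C v = Add u b \<or> C v = Add b u \<or> C v = Mul u b \<or> C v = Mul b u"
    unfolding child_def by blast
  with assms(1) \<open>v < N\<close> have "u < v"
    unfolding wf_circuit_def by blast
  with step have "D w \<le> D u" by simp
  also have "D u \<le> D v"
    using gate assms(2,3) \<open>v < N\<close> unfolding deg_labelling_def synt_homogeneous_def by fastforce
  finally show ?case .
qed simp

declare pd.simps [simp del] evalc.simps [simp del]

lemma pd_outside: "\<not> in_sub C w v \<Longrightarrow> pd C D w v = 0"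
  by (simp add: pd.simps)

lemma pd_self: "pd C D v v = 1"
  by (simp add: pd.simps in_sub_refl)

lemma pd_leaf: "w \<noteq> v \<Longrightarrow> C v = Var i \<or> C v = Cst c \<Longrightarrow> pd C D w v = 0"
  by (auto simp: pd.simps)

lemma pd_Add:
  assumes "C v = Add a b" "a < v" "b < v" "w \<noteq> v"
  shows "pd C D w v = pd C D w a + pd C D w b"
proof (cases "in_sub C w v")
  case False
  moreover have "child C a v" "child C b v"
    using assms(1) unfolding child_def by auto
  ultimately show ?thesis by (metis add_0 in_sub_child pd_outside)
qed (use assms in \<open>simp add: pd.simps\<close>)

lemma pd_Mul:
  assumes "C v = Mul a b" "a < v" "b < v" "w \<noteq> v"
  shows "pd C D w v =
    (if D b \<le> D a then pd C D w a * evalc C b else pd C D w b * evalc C a)"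
proof (cases "in_sub C w v")
  case False
  moreover have "child C a v" "child C b v"
    using assms(1) unfolding child_def by auto
  ultimately show ?thesis by (metis in_sub_child mult_zero_left pd_outside)
qed (use assms in \<open>simp add: pd.simps\<close>)

lemma tdeg_pd_le:
  assumes wf: "wf_circuit C N" and labels: "deg_labelling C N D"
    and hom: "synt_homogeneous C N D" and "v < N"
  shows "tdeg (pd C D w v) \<le> D v - D w"
  using \<open>v < N\<close>
proof (induction v rule: less_induct)
  case (less v)
  have children: "a < v \<and> b < v" if "C v = Add a b \<or> C v = Mul a b" for a b
    using wf less.prems that unfolding wf_circuit_def by blast
  have factor_bound:
    "tdeg (pd C D w x * evalc C y) \<le> D x + D y - D w" if "x < v" "y < v" for x y
  proof (rule tdeg_mult_le_diff)
    show "tdeg (pd C D w x) \<le> D x - D w"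
      using less.IH that less.prems by simp
    show "tdeg (evalc C y) \<le> D y"
      using labels that less.prems unfolding deg_labelling_def by simp
    show "D w \<le> D x" if "pd C D w x \<noteq> 0"
      using label_mono_in_sub[OF wf labels hom] pd_outside that \<open>x < v\<close> less.prems
      by (metis order.strict_trans)
  qed
  show ?case
  proof (cases "w = v")
    case False
    show ?thesis
    proof (cases "C v")
      case (Add a b)
      with hom less.prems have "D a = D v" "D b = D v"
        unfolding synt_homogeneous_def by auto
      moreover have "a < v" "b < v"
        using Add children by auto
      ultimately show ?thesis
        using less.IH[of a] less.IH[of b] less.prems
        by (simp add: pd_Add[where C = C and v = v, OF Add \<open>a < v\<close> \<open>b < v\<close> False]
            tdeg_add_le)
    next
      case (Mul a b)
      with labels less.prems have "D v = D a + D b"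
        unfolding deg_labelling_def by auto
      moreover have "a < v" "b < v"
        using Mul children by auto
      ultimately show ?thesis
        using factor_bound[of a b] factor_bound[of b a]
        by (simp add: pd_Mul[where C = C and v = v, OF Mul \<open>a < v\<close> \<open>b < v\<close> False]
            add.commute)
    qed (use False pd_leaf in auto)
  qed (simp add: pd_self)
qed

theorem mainTheorem11:
  fixes C :: "nat \<Rightarrow> gate" and N :: nat and D :: "nat \<Rightarrow> nat" and w v :: nat
  assumes "wf_circuit C N"
    and "deg_labelling C N D"
    and "synt_homogeneous C N D"
    and "w < N" and "v < N"
    and "2 * D w > D v"
  shows "tdeg (pd C D w v) \<le> D v - D w"
  using tdeg_pd_le[OF assms(1-3,5)] .

end
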